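(* Let $n\ge1$ and let $\mathcal{M}\subseteq\mathbb{C}^{2^n}$ be a subspace of dimension greater than one. Then there are two orthonormal vectors $\phi,\psi\in\mathcal{M}$ such that $\sum_{x\in\{0,1\}^n}|\phi(x)|\cdot|\psi(x)|\ge\frac12$.
   Context: Vectors in $\mathbb{C}^{2^n}$ are written $\phi=\sum_{x\in\{0,1\}^n}\phi(x)|x\rangle$ in the standard basis. *)

theory Defs
  imports "HOL-Analysis.Analysis"
begin

text \<open>Vectors of C^(2^n) are indexed by x in {0,1}^n, modelled as the finite type bool ^ 'n
  (n = CARD('n) >= 1). Subspaces and dimension are complex-linear ones (scalar action (*s)).\<close>

definition cinner :: "complex ^ 'i \<Rightarrow> complex ^ 'i \<Rightarrow> complex" where
  "cinner u v = (\<Sum>x\<in>UNIV. cnj (u $ x) * v $ x)"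

definition orthonormal_pair :: "complex ^ 'i \<Rightarrow> complex ^ 'i \<Rightarrow> bool" where
  "orthonormal_pair u v \<longleftrightarrow> cinner u u = 1 \<and> cinner v v = 1 \<and> cinner u v = 0"

end

theory Submission
  imports Defs
begin

text \<open>Given orthonormal \<open>u, v \<in> M\<close> and a unimodular \<open>e\<close>, the vectors
  \<open>(u + e v)/\<surd>2\<close> and \<open>(u - e v)/\<surd>2\<close> are again orthonormal and lie in \<open>M\<close>; the
  product of their \<open>x\<close>-th components is \<open>(u(x)\<^sup>2 - e\<^sup>2 v(x)\<^sup>2)/2\<close>. For \<open>e = 1\<close> and
  \<open>e = i\<close> the two overlaps therefore add up to
  \<open>\<Sum>\<^sub>x (|u(x)\<^sup>2 - v(x)\<^sup>2| + |u(x)\<^sup>2 + v(x)\<^sup>2|)/2\<close>, which by the triangle inequality is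
  at least \<open>\<Sum>\<^sub>x (|u(x)|\<^sup>2 + |v(x)|\<^sup>2)/2 = 1\<close>; so one of the two overlaps is at
  least \<open>1/2\<close>.\<close>

lemma cinner_add_left: "cinner (a + b) c = cinner a c + cinner b c"
  by (simp add: cinner_def distrib_right sum.distrib)

lemma cinner_add_right: "cinner a (b + c) = cinner a b + cinner a c"
  by (simp add: cinner_def distrib_left sum.distrib)

lemma cinner_diff_left: "cinner (a - b) c = cinner a c - cinner b c"
  by (simp add: cinner_def left_diff_distrib sum_subtractf)

lemma cinner_diff_right: "cinner a (b - c) = cinner a b - cinner a c"
  by (simp add: cinner_def right_diff_distrib sum_subtractf)

lemma cinner_scale_left: "cinner (r *s a) b = cnj r * cinner a b"
  by (simp add: cinner_def sum_distrib_left mult.assoc)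

lemma cinner_scale_right: "cinner a (r *s b) = r * cinner a b"
  by (simp add: cinner_def sum_distrib_left mult.left_commute)

lemma cinner_commute: "cinner a b = cnj (cinner b a)"
  by (simp add: cinner_def mult.commute)

lemma scaleR_eq_of_real_scale: "r *\<^sub>R a = (of_real r :: complex) *s a"
  by (simp add: vec_eq_iff scaleR_conv_of_real[where 'a=complex])

lemma cinner_scaleR_left: "cinner (r *\<^sub>R a) b = of_real r * cinner a b"
  by (simp add: scaleR_eq_of_real_scale cinner_scale_left)

lemma cinner_scaleR_right: "cinner a (r *\<^sub>R b) = of_real r * cinner a b"
  by (simp add: scaleR_eq_of_real_scale cinner_scale_right)

lemma sum_norm_component_sq: "(\<Sum>x\<in>UNIV. (norm (a $ x))\<^sup>2) = (norm a)\<^sup>2"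
  by (simp add: norm_vec_def L2_set_def sum_nonneg)

lemma cinner_self_eq_norm_sq: "cinner a a = of_real ((norm a)\<^sup>2)"
  unfolding cinner_def sum_norm_component_sq[symmetric] of_real_sum
  by (rule sum.cong[OF refl]) (metis complex_norm_square mult.commute of_real_power)

lemma cinner_self_eq_1_iff: "cinner a a = 1 \<longleftrightarrow> norm a = 1"
proof -
  have "(norm a)\<^sup>2 = 1 \<longleftrightarrow> norm a = 1"
    by (simp add: abs_square_eq_1)
  then show ?thesis
    by (simp add: cinner_self_eq_norm_sq flip: of_real_power)
qed

lemma orthonormal_pair_sgn:
  assumes "a \<noteq> 0" "b \<noteq> 0" "cinner a b = 0"
  shows "orthonormal_pair (sgn a) (sgn b)"
  unfolding orthonormal_pair_def cinner_self_eq_1_iff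
  using assms by (simp add: norm_sgn sgn_vec_def cinner_scaleR_left cinner_scaleR_right)

lemma not_subset_span_if_card_less_dim:
  assumes "finite A" "card A < vec.dim M"
  shows "\<not> M \<subseteq> vec.span A"
proof
  assume "M \<subseteq> vec.span A"
  then have "vec.dim M \<le> card A"
    using assms(1) by (rule vec.dim_le_card)
  with assms(2) show False
    by simp
qed

lemma subspace_obtain_orthonormal_pair:
  assumes M: "vec.subspace M" and dim: "vec.dim M > 1"
  obtains u v where "u \<in> M" "v \<in> M" "orthonormal_pair u v"
proof -
  obtain a where a: "a \<in> M" "a \<notin> vec.span {}"
    using not_subset_span_if_card_less_dim[of "{}" M] dim by auto
  obtain b where b: "b \<in> M" "b \<notin> vec.span {a}"
    using not_subset_span_if_card_less_dim[of "{a}" M] dim by auto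
  have "a \<noteq> 0"
    using a(2) by simp
  then have "cinner a a \<noteq> 0"
    by (simp add: cinner_self_eq_norm_sq)
  define w where "w = b - (cinner a b / cinner a a) *s a"
  have "cinner a w = 0"
    using \<open>cinner a a \<noteq> 0\<close> by (simp add: w_def cinner_diff_right cinner_scale_right)
  moreover have "w \<noteq> 0"
  proof
    assume "w = 0"
    then have "b = (cinner a b / cinner a a) *s a"
      by (simp add: w_def)
    then show False
      using b(2) by (metis vec.span_base vec.span_scale singletonI)
  qed
  moreover have "sgn a \<in> M" "sgn w \<in> M"
    using M a(1) b(1)
    by (simp_all add: w_def sgn_vec_def scaleR_eq_of_real_scale vec.subspace_scale vec.subspace_diff)
  ultimately show thesis
    using that orthonormal_pair_sgn \<open>a \<noteq> 0\<close> by blast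
qed

lemma orthonormal_pair_balanced:
  assumes "orthonormal_pair u v" and "cmod e = 1"
  shows "orthonormal_pair ((1 / sqrt 2) *\<^sub>R (u + e *s v)) ((1 / sqrt 2) *\<^sub>R (u - e *s v))"
proof -
  have uu: "cinner u u = 1" and vv: "cinner v v = 1" and uv: "cinner u v = 0"
    using assms(1) by (simp_all add: orthonormal_pair_def)
  have vu: "cinner v u = 0"
    using uv cinner_commute[of v u] by simp
  have "e * cnj e = 1" "cnj e * e = 1"
    using complex_norm_square[of e] assms(2) by (simp_all add: mult.commute)
  then have "cinner (u + e *s v) (u + e *s v) = 2" "cinner (u - e *s v) (u - e *s v) = 2"
    "cinner (u + e *s v) (u - e *s v) = 0"
    by (simp_all add: cinner_add_left cinner_add_right cinner_diff_left
        cinner_diff_right cinner_scale_left cinner_scale_right uu vv uv vu)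
  moreover have "of_real (1 / sqrt 2) * of_real (1 / sqrt 2) = (1 / 2 :: complex)"
    by (simp flip: of_real_mult)
  ultimately show ?thesis
    by (simp add: orthonormal_pair_def cinner_scaleR_left cinner_scaleR_right mult.assoc[symmetric])
qed

lemma norm_balanced_component_product:
  "norm (((1 / sqrt 2) *\<^sub>R (u + e *s v)) $ x) * norm (((1 / sqrt 2) *\<^sub>R (u - e *s v)) $ x)
     = cmod ((u $ x)\<^sup>2 - e\<^sup>2 * (v $ x)\<^sup>2) / 2"
proof -
  have "norm (((1 / sqrt 2) *\<^sub>R (u + e *s v)) $ x) * norm (((1 / sqrt 2) *\<^sub>R (u - e *s v)) $ x)
      = (1 / sqrt 2) * (1 / sqrt 2) * cmod ((u $ x + e * v $ x) * (u $ x - e * v $ x))"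
    by (simp add: norm_mult)
  also have "(u $ x + e * v $ x) * (u $ x - e * v $ x) = (u $ x)\<^sup>2 - e\<^sup>2 * (v $ x)\<^sup>2"
    by (simp add: power2_eq_square algebra_simps)
  also have "(1 / sqrt 2) * (1 / sqrt 2) = (1 / 2 :: real)"
    by (simp add: power_divide flip: power2_eq_square)
  finally show ?thesis
    by simp
qed

lemma norm_sq_add_norm_sq_le:
  fixes a b :: complex
  shows "(cmod a)\<^sup>2 + (cmod b)\<^sup>2 \<le> cmod (a\<^sup>2 - b\<^sup>2) + cmod (a\<^sup>2 + b\<^sup>2)"
proof -
  have "cmod (2 * a\<^sup>2) \<le> cmod (a\<^sup>2 - b\<^sup>2) + cmod (a\<^sup>2 + b\<^sup>2)"
    using norm_triangle_ineq[of "a\<^sup>2 - b\<^sup>2" "a\<^sup>2 + b\<^sup>2"] by simp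
  moreover have "cmod (2 * b\<^sup>2) \<le> cmod (a\<^sup>2 - b\<^sup>2) + cmod (a\<^sup>2 + b\<^sup>2)"
    using norm_triangle_ineq4[of "a\<^sup>2 + b\<^sup>2" "a\<^sup>2 - b\<^sup>2"] by simp
  ultimately show ?thesis
    by (simp add: norm_mult norm_power)
qed

lemma norm_sq_add_norm_sq_le_sums:
  "(norm u)\<^sup>2 + (norm v)\<^sup>2
     \<le> (\<Sum>x\<in>UNIV. cmod ((u $ x)\<^sup>2 - (v $ x)\<^sup>2)) + (\<Sum>x\<in>UNIV. cmod ((u $ x)\<^sup>2 + (v $ x)\<^sup>2))"
proof -
  have "(norm u)\<^sup>2 + (norm v)\<^sup>2 = (\<Sum>x\<in>UNIV. (cmod (u $ x))\<^sup>2 + (cmod (v $ x))\<^sup>2)"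
    by (simp add: sum.distrib sum_norm_component_sq)
  also have "\<dots> \<le> (\<Sum>x\<in>UNIV. cmod ((u $ x)\<^sup>2 - (v $ x)\<^sup>2) + cmod ((u $ x)\<^sup>2 + (v $ x)\<^sup>2))"
    by (rule sum_mono) (rule norm_sq_add_norm_sq_le)
  finally show ?thesis
    by (simp add: sum.distrib)
qed

theorem lemma3:
  fixes M :: "(complex ^ (bool ^ 'n)) set"
  assumes "vec.subspace M"
    and "vec.dim M > 1"
  shows "\<exists>\<phi> \<psi>. \<phi> \<in> M \<and> \<psi> \<in> M \<and> orthonormal_pair \<phi> \<psi> \<and>
           (\<Sum>x\<in>UNIV. norm (\<phi> $ x) * norm (\<psi> $ x)) \<ge> 1/2"
proof -
  obtain u v where "u \<in> M" "v \<in> M" and uv: "orthonormal_pair u v"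
    using subspace_obtain_orthonormal_pair assms by blast
  define \<phi> where "\<phi> e = (1 / sqrt 2) *\<^sub>R (u + e *s v)" for e
  define \<psi> where "\<psi> e = (1 / sqrt 2) *\<^sub>R (u - e *s v)" for e
  define overlap where "overlap e = (\<Sum>x\<in>UNIV. norm (\<phi> e $ x) * norm (\<psi> e $ x))" for e
  have in_M: "\<phi> e \<in> M \<and> \<psi> e \<in> M" for e
    unfolding \<phi>_def \<psi>_def scaleR_eq_of_real_scale
    using assms(1) \<open>u \<in> M\<close> \<open>v \<in> M\<close>
    by (simp add: vec.subspace_scale vec.subspace_add vec.subspace_diff)
  have orth: "orthonormal_pair (\<phi> e) (\<psi> e)" if "cmod e = 1" for e
    unfolding \<phi>_def \<psi>_def using orthonormal_pair_balanced[OF uv that] .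
  have overlap: "overlap e = (\<Sum>x\<in>UNIV. cmod ((u $ x)\<^sup>2 - e\<^sup>2 * (v $ x)\<^sup>2)) / 2" for e
    unfolding overlap_def \<phi>_def \<psi>_def norm_balanced_component_product
    by (simp add: sum_divide_distrib)
  have "norm u = 1" "norm v = 1"
    using uv by (simp_all add: orthonormal_pair_def cinner_self_eq_1_iff)
  then have "1 \<le> overlap 1 + overlap \<i>"
    using norm_sq_add_norm_sq_le_sums[of u v] by (simp add: overlap)
  then have "overlap 1 \<ge> 1/2 \<or> overlap \<i> \<ge> 1/2"
    by linarith
  then obtain e where e: "cmod e = 1" "overlap e \<ge> 1/2"
    using norm_one norm_ii by blast
  show ?thesis
    using in_M orth[OF e(1)] e(2) unfolding overlap_def by blast
qed

end
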